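(* For every integer $n\ge 1$, $|\mathfrak D^1_{2n}(1342,4213)|=2^{n-1}$.
   Context: A Dumont permutation of the first kind of length $2n$ is a permutation $\pi\in\mathfrak S_{2n}$ such that for every $i=1,\dots,2n$: if $\pi(i)$ is even then $i<2n$ and $\pi(i)>\pi(i+1)$; if $\pi(i)$ is odd then $i=2n$ or $\pi(i)<\pi(i+1)$. $\mathfrak D^1_{2n}$ denotes the set of these. A permutation $\sigma$ contains a pattern $\tau\in\mathfrak S_k$ if some subsequence $(\sigma(i_1),\dots,\sigma(i_k))$, $i_1<\dots<i_k$, is order-isomorphic to $\tau$; otherwise $\sigma$ avoids $\tau$. $\mathfrak D^1_{2n}(T)$ denotes the set of permutations in $\mathfrak D^1_{2n}$ avoiding every pattern in $T$. *)

theory Defs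
  imports "HOL-Combinatorics.Permutations"
begin

text \<open>Permutations of [m] = {1..m} are functions on nat that permute {1..m}
(and are the identity elsewhere).  Patterns are given in one-line notation as
lists of the values 1..k.\<close>

definition dumont1 :: "nat \<Rightarrow> (nat \<Rightarrow> nat) \<Rightarrow> bool" where
  "dumont1 n \<pi> \<longleftrightarrow> \<pi> permutes {1..2*n} \<and>
     (\<forall>i\<in>{1..2*n}.
        (even (\<pi> i) \<longrightarrow> i < 2*n \<and> \<pi> i > \<pi> (i+1)) \<and>
        (odd (\<pi> i) \<longrightarrow> i = 2*n \<or> \<pi> i < \<pi> (i+1)))"

definition contains_pattern :: "nat \<Rightarrow> (nat \<Rightarrow> nat) \<Rightarrow> nat list \<Rightarrow> bool" where
  "contains_pattern m \<sigma> \<tau> \<longleftrightarrow>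
     (\<exists>idx :: nat \<Rightarrow> nat.
        (\<forall>a<length \<tau>. idx a \<in> {1..m}) \<and>
        (\<forall>a b. a < b \<and> b < length \<tau> \<longrightarrow> idx a < idx b) \<and>
        (\<forall>a<length \<tau>. \<forall>b<length \<tau>. \<sigma> (idx a) < \<sigma> (idx b) \<longleftrightarrow> \<tau> ! a < \<tau> ! b))"

definition dumont1_avoid :: "nat \<Rightarrow> nat list set \<Rightarrow> (nat \<Rightarrow> nat) set" where
  "dumont1_avoid n T = {\<pi>. dumont1 n \<pi> \<and> (\<forall>\<tau>\<in>T. \<not> contains_pattern (2*n) \<pi> \<tau>)}"

end

(*
  Let A(n) be the set of Dumont permutations of [2n] avoiding 1342 and 4213. For n >= 1 the
  last two entries of a member of A(n) are either 2n, 2n-1 or 2, 1: the last entry is odd, the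
  two patterns force it to be 1 or 2n-1, and they force its left neighbour to be its successor.
  Hence every member of A(n+1) arises in exactly one way from a member of A(n), either by
  appending (2n+2)(2n+1), or by swapping its last two entries, raising all entries by 2 and
  appending 2 1. So |A(n+1)| = 2 |A(n)| and |A(1)| = 1.

  The facts about the last two entries are proved for the larger class obtained by dropping the
  Dumont condition at the last position. This class is closed under complementation, which
  exchanges 1342 and 4213 and so turns the statement for an odd last entry into the one for an
  even last entry; the latter is needed because deleting the final 2 1 leaves a permutation
  ending in an even entry.
*)

theory Submission
  imports Defs
begin

section \<open>Occurrences of 1342 and 4213\<close>

lemma all_less_4_iff: "(\<forall>a<4::nat. P a) \<longleftrightarrow> P 0 \<and> P 1 \<and> P 2 \<and> P 3"
  by (auto simp: less_Suc_eq numeral_eq_Suc)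

lemma contains_pattern_length_4:
  assumes "length \<tau> = 4"
  shows "contains_pattern M t \<tau> \<longleftrightarrow>
    (\<exists>i j k l. 1 \<le> i \<and> i < j \<and> j < k \<and> k < l \<and> l \<le> M \<and>
       (\<forall>a<4. \<forall>b<4. t ([i, j, k, l] ! a) < t ([i, j, k, l] ! b) \<longleftrightarrow> \<tau> ! a < \<tau> ! b))"
    (is "_ \<longleftrightarrow> (\<exists>i j k l. ?occ i j k l)")
proof
  assume "contains_pattern M t \<tau>"
  then obtain idx where "\<forall>a<4. idx a \<in> {1..M}" "\<forall>a b. a < b \<and> b < 4 \<longrightarrow> idx a < idx b"
    "\<forall>a<4. \<forall>b<4. t (idx a) < t (idx b) \<longleftrightarrow> \<tau> ! a < \<tau> ! b"
    using assms unfolding contains_pattern_def by auto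
  moreover have "\<forall>a<4. [idx 0, idx 1, idx 2, idx 3] ! a = idx a"
    by (simp add: all_less_4_iff)
  ultimately have "?occ (idx 0) (idx 1) (idx 2) (idx 3)"
    by (simp add: all_less_4_iff)
  then show "\<exists>i j k l. ?occ i j k l" by blast
next
  assume "\<exists>i j k l. ?occ i j k l"
  then obtain i j k l where occ: "?occ i j k l" by blast
  have "sorted_wrt (<) [i, j, k, l]" using occ by auto
  then show "contains_pattern M t \<tau>"
    unfolding contains_pattern_def assms sorted_wrt_iff_nth_less
    by (intro exI[of _ "\<lambda>a. [i, j, k, l] ! a"]) (use occ in \<open>auto simp: all_less_4_iff\<close>)
qed

definition has_1342 :: "nat \<Rightarrow> (nat \<Rightarrow> nat) \<Rightarrow> bool" where
  "has_1342 M t \<longleftrightarrow>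
     (\<exists>i j k l. 1 \<le> i \<and> i < j \<and> j < k \<and> k < l \<and> l \<le> M \<and> t i < t l \<and> t l < t j \<and> t j < t k)"

definition has_4213 :: "nat \<Rightarrow> (nat \<Rightarrow> nat) \<Rightarrow> bool" where
  "has_4213 M t \<longleftrightarrow>
     (\<exists>i j k l. 1 \<le> i \<and> i < j \<and> j < k \<and> k < l \<and> l \<le> M \<and> t k < t j \<and> t j < t l \<and> t l < t i)"

lemma contains_1342_iff: "contains_pattern M t [1, 3, 4, 2] \<longleftrightarrow> has_1342 M t"
proof -
  have "(\<forall>a<4. \<forall>b<4.
      t ([i, j, k, l] ! a) < t ([i, j, k, l] ! b) \<longleftrightarrow> [1, 3, 4, 2::nat] ! a < [1, 3, 4, 2] ! b)
    \<longleftrightarrow> t i < t l \<and> t l < t j \<and> t j < t k" for i j k l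
    by (auto simp: all_less_4_iff)
  then show ?thesis
    unfolding has_1342_def by (subst contains_pattern_length_4) auto
qed

lemma contains_4213_iff: "contains_pattern M t [4, 2, 1, 3] \<longleftrightarrow> has_4213 M t"
proof -
  have "(\<forall>a<4. \<forall>b<4.
      t ([i, j, k, l] ! a) < t ([i, j, k, l] ! b) \<longleftrightarrow> [4, 2, 1, 3::nat] ! a < [4, 2, 1, 3] ! b)
    \<longleftrightarrow> t k < t j \<and> t j < t l \<and> t l < t i" for i j k l
    by (auto simp: all_less_4_iff)
  then show ?thesis
    unfolding has_4213_def by (subst contains_pattern_length_4) auto
qed

lemma has_1342_mono: "has_1342 N t \<Longrightarrow> N \<le> M \<Longrightarrow> has_1342 M t"
  unfolding has_1342_def by (meson order_trans)

lemma has_4213_mono: "has_4213 N t \<Longrightarrow> N \<le> M \<Longrightarrow> has_4213 M t"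
  unfolding has_4213_def by (meson order_trans)

lemma has_1342_cong:
  assumes "\<And>a b. a \<in> {1..M} \<Longrightarrow> b \<in> {1..M} \<Longrightarrow> t a < t b \<longleftrightarrow> u a < u b"
  shows "has_1342 M t \<longleftrightarrow> has_1342 M u"
  unfolding has_1342_def by (intro ex_cong1 conj_cong refl) (simp_all add: assms)

lemma has_4213_cong:
  assumes "\<And>a b. a \<in> {1..M} \<Longrightarrow> b \<in> {1..M} \<Longrightarrow> t a < t b \<longleftrightarrow> u a < u b"
  shows "has_4213 M t \<longleftrightarrow> has_4213 M u"
  unfolding has_4213_def by (intro ex_cong1 conj_cong refl) (simp_all add: assms)

lemma has_1342_iff_has_4213_reverse:
  assumes "\<And>a b. a \<in> {1..M} \<Longrightarrow> b \<in> {1..M} \<Longrightarrow> u a < u b \<longleftrightarrow> t b < t a"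
  shows "has_1342 M u \<longleftrightarrow> has_4213 M t"
proof -
  have "(u i < u l \<and> u l < u j \<and> u j < u k) \<longleftrightarrow> (t k < t j \<and> t j < t l \<and> t l < t i)"
    if "1 \<le> i" "i < j" "j < k" "k < l" "l \<le> M" for i j k l
    using that assms by auto
  then show ?thesis
    unfolding has_1342_def has_4213_def by blast
qed

lemma has_1342_extend:
  assumes "(\<forall>i\<in>{1..N}. \<forall>l\<in>{N<..N + 2}. t i < t l) \<or> (\<forall>i\<in>{1..N}. \<forall>l\<in>{N<..N + 2}. t l < t i)"
  shows "has_1342 (N + 2) t \<longleftrightarrow> has_1342 N t"
proof
  assume "has_1342 (N + 2) t"
  then obtain i j k l where occ: "1 \<le> i" "i < j" "j < k" "k < l" "l \<le> N + 2"
    "t i < t l" "t l < t j" "t j < t k"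
    unfolding has_1342_def by blast
  have "l \<le> N"
  proof (rule ccontr)
    assume "\<not> l \<le> N"
    then have "l \<in> {N<..N + 2}" "i \<in> {1..N}" "j \<in> {1..N}" using occ by auto
    then show False using assms occ(6-8) by (meson less_asym)
  qed
  then show "has_1342 N t" unfolding has_1342_def using occ by blast
qed (simp add: has_1342_mono)

lemma has_4213_extend:
  assumes "(\<forall>i\<in>{1..N}. \<forall>l\<in>{N<..N + 2}. t i < t l) \<or> (\<forall>i\<in>{1..N}. \<forall>l\<in>{N<..N + 2}. t l < t i)"
  shows "has_4213 (N + 2) t \<longleftrightarrow> has_4213 N t"
proof
  assume "has_4213 (N + 2) t"
  then obtain i j k l where occ: "1 \<le> i" "i < j" "j < k" "k < l" "l \<le> N + 2"
    "t k < t j" "t j < t l" "t l < t i"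
    unfolding has_4213_def by blast
  have "l \<le> N"
  proof (rule ccontr)
    assume "\<not> l \<le> N"
    then have "l \<in> {N<..N + 2}" "i \<in> {1..N}" "j \<in> {1..N}" using occ by auto
    then show False using assms occ(6-8) by (meson less_asym)
  qed
  then show "has_4213 N t" unfolding has_4213_def using occ by blast
qed (simp add: has_4213_mono)

lemma has_1342_swap_last:
  assumes "t (M - 1) = t M + 1 \<or> t M = t (M - 1) + 1"
  shows "has_1342 M (t \<circ> transpose (M - 1) M) \<longleftrightarrow> has_1342 M t"
proof -
  have swap_imp: "has_1342 M u"
    if consecutive: "u (M - 1) = u M + 1 \<or> u M = u (M - 1) + 1"
      and "has_1342 M (u \<circ> transpose (M - 1) M)" for u
  proof -
    obtain i j k l where occ: "1 \<le> i" "i < j" "j < k" "k < l" "l \<le> M"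
      "u (transpose (M - 1) M i) < u (transpose (M - 1) M l)"
      "u (transpose (M - 1) M l) < u (transpose (M - 1) M j)"
      "u (transpose (M - 1) M j) < u (transpose (M - 1) M k)"
      using \<open>has_1342 M (u \<circ> transpose (M - 1) M)\<close> unfolding has_1342_def by auto
    show ?thesis
    proof (cases "k < M - 1")
      case True
      then have "transpose (M - 1) M l \<in> {k<..M}" using occ by (auto simp: transpose_def)
      moreover have "transpose (M - 1) M x = x" if "x \<le> k" for x
        using True that by simp
      ultimately show ?thesis
        unfolding has_1342_def using occ
        by (intro exI[of _ i] exI[of _ j] exI[of _ k] exI[of _ "transpose (M - 1) M l"]) auto
    next
      case False
      \<comment> \<open>then the occurrence ends in the two swapped entries, which are consecutive values
        but would have to enclose the value at \<open>j\<close>\<close>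
      then have "k = M - 1" "l = M" using occ by auto
      then show ?thesis using occ consecutive by auto
    qed
  qed
  have "(t \<circ> transpose (M - 1) M) \<circ> transpose (M - 1) M = t" by (simp add: fun_eq_iff)
  then show ?thesis
    using swap_imp[of t] swap_imp[of "t \<circ> transpose (M - 1) M"] assms by auto
qed

lemma has_4213_swap_last:
  assumes "t (M - 1) = t M + 1 \<or> t M = t (M - 1) + 1"
  shows "has_4213 M (t \<circ> transpose (M - 1) M) \<longleftrightarrow> has_4213 M t"
proof -
  have swap_imp: "has_4213 M u"
    if consecutive: "u (M - 1) = u M + 1 \<or> u M = u (M - 1) + 1"
      and "has_4213 M (u \<circ> transpose (M - 1) M)" for u
  proof -
    obtain i j k l where occ: "1 \<le> i" "i < j" "j < k" "k < l" "l \<le> M"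
      "u (transpose (M - 1) M k) < u (transpose (M - 1) M j)"
      "u (transpose (M - 1) M j) < u (transpose (M - 1) M l)"
      "u (transpose (M - 1) M l) < u (transpose (M - 1) M i)"
      using \<open>has_4213 M (u \<circ> transpose (M - 1) M)\<close> unfolding has_4213_def by auto
    show ?thesis
    proof (cases "k < M - 1")
      case True
      then have "transpose (M - 1) M l \<in> {k<..M}" using occ by (auto simp: transpose_def)
      moreover have "transpose (M - 1) M x = x" if "x \<le> k" for x
        using True that by simp
      ultimately show ?thesis
        unfolding has_4213_def using occ
        by (intro exI[of _ i] exI[of _ j] exI[of _ k] exI[of _ "transpose (M - 1) M l"]) auto
    next
      case False
      then have "k = M - 1" "l = M" using occ by auto
      then show ?thesis using occ consecutive by auto
    qed
  qed
  have "(t \<circ> transpose (M - 1) M) \<circ> transpose (M - 1) M = t" by (simp add: fun_eq_iff)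
  then show ?thesis
    using swap_imp[of t] swap_imp[of "t \<circ> transpose (M - 1) M"] assms by auto
qed

section \<open>The Dumont condition\<close>

definition dumont_step :: "(nat \<Rightarrow> nat) \<Rightarrow> nat \<Rightarrow> bool" where
  "dumont_step t i \<longleftrightarrow> (if even (t i) then t (i + 1) < t i else t i < t (i + 1))"

definition dumont_steps :: "nat \<Rightarrow> (nat \<Rightarrow> nat) \<Rightarrow> bool" where
  "dumont_steps M t \<longleftrightarrow> (\<forall>i\<in>{1..<M}. dumont_step t i)"

lemma dumont1_iff:
  assumes "1 \<le> n"
  shows "dumont1 n \<pi> \<longleftrightarrow> \<pi> permutes {1..2 * n} \<and> dumont_steps (2 * n) \<pi> \<and> odd (\<pi> (2 * n))"
proof -
  have "{1..2 * n} = insert (2 * n) {1..<2 * n}" using assms by auto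
  then show ?thesis
    unfolding dumont1_def dumont_steps_def dumont_step_def by auto
qed

lemma dumont_steps_Suc:
  "dumont_steps (Suc M) t \<longleftrightarrow> dumont_steps M t \<and> (1 \<le> M \<longrightarrow> dumont_step t M)"
  unfolding dumont_steps_def by (auto simp: less_Suc_eq)

lemma dumont_steps_shift:
  assumes "even c" and "\<And>i. i \<in> {1..M} \<Longrightarrow> u i = t i + c"
  shows "dumont_steps M u \<longleftrightarrow> dumont_steps M t"
  unfolding dumont_steps_def dumont_step_def using assms by auto

lemma dumont_steps_swap_last:
  assumes steps: "dumont_steps M t" and inj: "inj_on t {1..M}"
    and "odd a" and pair: "{t (M - 1), t M} = {a, a + 1}"
  shows "dumont_steps M (t \<circ> transpose (M - 1) M)"
  unfolding dumont_steps_def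
proof
  fix i assume i: "i \<in> {1..<M}"
  consider "i + 2 < M" | "i + 2 = M" | "i + 1 = M" using i by fastforce
  then show "dumont_step (t \<circ> transpose (M - 1) M) i"
  proof cases
    case 1
    have "dumont_step t i" using steps i by (simp add: dumont_steps_def)
    then show ?thesis using 1 by (simp add: dumont_step_def split: if_splits)
  next
    case 2
    have "t i \<noteq> t M" using inj_onD[OF inj, of i M] i 2 by auto
    moreover have "dumont_step t i" using steps i by (simp add: dumont_steps_def)
    moreover have "t (i + 1) = t (M - 1)" using 2 by (cases M) auto
    ultimately show ?thesis
      using 2 pair by (auto simp: dumont_step_def doubleton_eq_iff split: if_splits)
  next
    case 3
    then show ?thesis using pair \<open>odd a\<close> by (auto simp: dumont_step_def doubleton_eq_iff)
  qed
qed

section \<open>Last two entries of avoiders\<close>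

definition complement :: "nat \<Rightarrow> nat \<Rightarrow> nat" where
  "complement M v = (if v \<in> {1..M} then M + 1 - v else v)"

lemma complement_permutes: "complement M permutes {1..M}"
  by (rule inj_imp_permutes) (auto simp: complement_def inj_on_def)

locale avoiding_relaxed_dumont =
  fixes M :: nat and t :: "nat \<Rightarrow> nat"
  assumes permutes: "t permutes {1..M}"
    and even_M: "even M" and two_le_M: "2 \<le> M"
    and steps: "dumont_steps M t"
    and avoids_1342: "\<not> has_1342 M t" and avoids_4213: "\<not> has_4213 M t"
begin

lemma t_bounds: "1 \<le> i \<Longrightarrow> i \<le> M \<Longrightarrow> 1 \<le> t i \<and> t i \<le> M"
  using permutes_in_seg[OF permutes] by simp

lemma t_inj: "t i = t j \<Longrightarrow> i = j"
  using permutes_inj[OF permutes] by (auto dest: injD)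

lemma t_position:
  assumes "1 \<le> v" "v \<le> M"
  obtains i where "1 \<le> i" "i \<le> M" "t i = v"
  using assms permutes_image[OF permutes] by (metis atLeastAtMost_iff imageE)

lemma even_step: "1 \<le> i \<Longrightarrow> i < M \<Longrightarrow> even (t i) \<Longrightarrow> t (i + 1) < t i"
  using bspec[OF steps[unfolded dumont_steps_def], of i] by (simp add: dumont_step_def)

lemma odd_step: "1 \<le> i \<Longrightarrow> i < M \<Longrightarrow> odd (t i) \<Longrightarrow> t i < t (i + 1)"
  using bspec[OF steps[unfolded dumont_steps_def], of i] by (simp add: dumont_step_def)

lemma no_1342_at:
  "1 \<le> i \<Longrightarrow> i < j \<Longrightarrow> j < k \<Longrightarrow> k < l \<Longrightarrow> l \<le> M \<Longrightarrow> t i < t l \<Longrightarrow> t l < t j \<Longrightarrow> t j < t k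
    \<Longrightarrow> False"
  using avoids_1342 unfolding has_1342_def by blast

lemma no_4213_at:
  "1 \<le> i \<Longrightarrow> i < j \<Longrightarrow> j < k \<Longrightarrow> k < l \<Longrightarrow> l \<le> M \<Longrightarrow> t k < t j \<Longrightarrow> t j < t l \<Longrightarrow> t l < t i
    \<Longrightarrow> False"
  using avoids_4213 unfolding has_4213_def by blast

lemma next_after_two: "1 \<le> s \<Longrightarrow> s < M \<Longrightarrow> t s = 2 \<Longrightarrow> t (s + 1) = 1"
  using even_step[of s] t_bounds[of "s + 1"] by fastforce

lemma next_after_pred_top: "1 \<le> s \<Longrightarrow> s < M \<Longrightarrow> t s = M - 1 \<Longrightarrow> t (s + 1) = M"
  using odd_step[of s] t_bounds[of "s + 1"] even_M two_le_M by fastforce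

lemma last_not_between: "\<not> (2 < t M \<and> t M < M - 1)"
proof
  assume inner: "2 < t M \<and> t M < M - 1"
  obtain q where q: "1 \<le> q" "q \<le> M" "t q = 1"
    by (rule t_position[of 1]) (use two_le_M in auto)
  obtain p where p: "1 \<le> p" "p \<le> M" "t p = M"
    by (rule t_position[of M]) (use two_le_M in auto)
  have "q \<noteq> M" "p \<noteq> M" "q \<noteq> p" using inner q p by auto
  then consider "q < p" | "p < q" by linarith
  then show False
  proof cases
    case 1
    obtain s where s: "1 \<le> s" "s \<le> M" "t s = M - 1"
      by (rule t_position[of "M - 1"]) (use two_le_M in auto)
    have "s \<noteq> M" using s inner by auto
    then have "s + 1 = p" using next_after_pred_top[of s] s p t_inj by auto
    moreover have "q < s" using 1 \<open>s + 1 = p\<close> q s inner by (cases "q = s") auto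
    ultimately show False
      by (intro no_1342_at[of q s p M]) (use q p s inner \<open>p \<noteq> M\<close> in auto)
  next
    case 2
    obtain s where s: "1 \<le> s" "s \<le> M" "t s = 2"
      by (rule t_position[of 2]) (use two_le_M in auto)
    have "s \<noteq> M" using s inner by auto
    then have "s + 1 = q" using next_after_two[of s] s q t_inj by auto
    moreover have "p < s" using 2 \<open>s + 1 = q\<close> p s inner by (cases "p = s") auto
    ultimately show False
      by (intro no_4213_at[of p s q M]) (use q p s inner \<open>q \<noteq> M\<close> in auto)
  qed
qed

lemma last_odd_cases: "odd (t M) \<Longrightarrow> t M = 1 \<or> t M = M - 1"
  using last_not_between t_bounds[of M] two_le_M even_M by presburger

lemma before_last_top:
  assumes last: "t M = M - 1"
  shows "t (M - 1) = M"
proof (rule ccontr)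
  \<comment> \<open>Otherwise \<open>M\<close> sits at some \<open>p < M - 1\<close> and \<open>a = t (M - 1)\<close> is odd. The patterns place
    \<open>a + 1\<close> before \<open>p\<close> and \<open>2\<close> after \<open>a + 1\<close>; as \<open>2\<close> is followed by \<open>1\<close>, the entries
    \<open>a + 1, 2, 1, a\<close> form a 4213.\<close>
  assume not_top: "t (M - 1) \<noteq> M"
  define a where "a = t (M - 1)"
  have M1: "1 \<le> M - 1" "M - 1 < M" "M - 1 + 1 = M" using two_le_M by auto
  have "odd a"
  proof
    assume "even a"
    then have "t M < a" using even_step[OF M1(1,2)] M1(3) a_def by simp
    then show False using last not_top t_bounds[OF M1(1)] M1 a_def by auto
  qed
  then have "a < M - 1" using odd_step[OF M1(1,2)] M1(3) last a_def by simp
  then have a_succ: "a + 1 < M - 1" using \<open>odd a\<close> even_M two_le_M by presburger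
  obtain p where p: "1 \<le> p" "p \<le> M" "t p = M"
    by (rule t_position[of M]) (use two_le_M in auto)
  have "p < M - 1" using p last not_top two_le_M by (cases "p = M - 1 \<or> p = M") auto
  obtain r where r: "1 \<le> r" "r \<le> M" "t r = a + 1"
    by (rule t_position[of "a + 1"]) (use a_succ in auto)
  have "r < M - 1" using r a_def last a_succ by (cases "r = M - 1 \<or> r = M") auto
  have "r < p"
  proof (rule ccontr)
    assume "\<not> r < p"
    then have "p < r" using p r a_succ by (cases "p = r") auto
    show False
      by (rule no_4213_at[of p r "M - 1" M]) (use p r last a_def a_succ \<open>p < r\<close> \<open>r < M - 1\<close> in auto)
  qed
  have "a \<noteq> 1"
  proof
    assume "a = 1"
    then have "t (r + 1) = t (M - 1)" using next_after_two[of r] r a_def \<open>r < M - 1\<close> by auto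
    then show False using t_inj \<open>r < p\<close> \<open>p < M - 1\<close> by fastforce
  qed
  then have "2 < a" using \<open>odd a\<close> by presburger
  obtain q where q: "1 \<le> q" "q \<le> M" "t q = 2"
    by (rule t_position[of 2]) (use two_le_M in auto)
  have "q < M - 1" using q a_def last \<open>2 < a\<close> a_succ
    by (cases "q = M - 1 \<or> q = M") auto
  then have next_one: "t (q + 1) = 1" using next_after_two[of q] q by auto
  have "r < q"
  proof (rule ccontr)
    assume "\<not> r < q"
    then have "q < r" using q r \<open>2 < a\<close> by (cases "q = r") auto
    show False
      by (rule no_1342_at[of q r p "M - 1"])
        (use p q r a_def a_succ \<open>2 < a\<close> \<open>q < r\<close> \<open>r < p\<close> \<open>p < M - 1\<close> in auto)
  qed
  have "q + 1 \<noteq> M - 1" using next_one a_def \<open>2 < a\<close> by auto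
  then show False
    by (intro no_4213_at[of r q "q + 1" "M - 1"])
      (use \<open>r < q\<close> \<open>q < M - 1\<close> next_one q r a_def \<open>2 < a\<close> in auto)
qed

lemma before_last_odd:
  assumes "odd (t M)"
  shows "t (M - 1) = t M + 1"
  using last_odd_cases[OF assms]
proof
  assume last: "t M = 1"
  obtain s where s: "1 \<le> s" "s \<le> M" "t s = 2"
    by (rule t_position[of 2]) (use two_le_M in auto)
  have "s \<noteq> M" using s last by auto
  then have "s + 1 = M" using next_after_two[of s] s last t_inj by auto
  then show ?thesis using s last by auto
qed (use before_last_top two_le_M in auto)

lemma avoiding_complement: "avoiding_relaxed_dumont M (complement M \<circ> t)"
proof
  have complement_value: "(complement M \<circ> t) i = M + 1 - t i" if "i \<in> {1..M}" for i
    using t_bounds that by (simp add: complement_def)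
  have reversed: "(complement M \<circ> t) i < (complement M \<circ> t) j \<longleftrightarrow> t j < t i"
    if "i \<in> {1..M}" "j \<in> {1..M}" for i j
    using complement_value[OF that(1)] complement_value[OF that(2)] t_bounds[of i] t_bounds[of j] that
    by auto
  show "complement M \<circ> t permutes {1..M}"
    by (rule permutes_compose[OF permutes complement_permutes])
  show "even M" "2 \<le> M" by (fact even_M two_le_M)+
  show "dumont_steps M (complement M \<circ> t)"
    unfolding dumont_steps_def
  proof
    fix i assume i: "i \<in> {1..<M}"
    then have "even ((complement M \<circ> t) i) \<longleftrightarrow> odd (t i)"
      using complement_value[of i] t_bounds[of i] even_M by auto
    then show "dumont_step (complement M \<circ> t) i"
      using even_step[of i] odd_step[of i] reversed[of i "i + 1"] reversed[of "i + 1" i] i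
      by (auto simp: dumont_step_def)
  qed
  have "has_1342 M (complement M \<circ> t) \<longleftrightarrow> has_4213 M t"
    by (rule has_1342_iff_has_4213_reverse) (rule reversed)
  then show "\<not> has_1342 M (complement M \<circ> t)" using avoids_4213 by blast
  have "has_1342 M t \<longleftrightarrow> has_4213 M (complement M \<circ> t)"
    by (rule has_1342_iff_has_4213_reverse) (rule reversed[symmetric])
  then show "\<not> has_4213 M (complement M \<circ> t)" using avoids_1342 by blast
qed

lemma before_last_even:
  assumes "even (t M)"
  shows "t (M - 1) + 1 = t M"
proof -
  interpret compl: avoiding_relaxed_dumont M "complement M \<circ> t" by (rule avoiding_complement)
  have "1 \<le> t M" "t M \<le> M" "1 \<le> t (M - 1)" "t (M - 1) \<le> M"
    using t_bounds[of M] t_bounds[of "M - 1"] two_le_M by auto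
  moreover have "odd (M + 1 - t M)" using assms even_M \<open>t M \<le> M\<close> by auto
  ultimately have "M + 1 - t (M - 1) = (M + 1 - t M) + 1"
    using compl.before_last_odd two_le_M by (simp add: complement_def)
  with \<open>t M \<le> M\<close> \<open>t (M - 1) \<le> M\<close> show ?thesis by linarith
qed

lemma swap_last:
  assumes "odd a" and pair: "{t (M - 1), t M} = {a, a + 1}"
  shows "avoiding_relaxed_dumont M (t \<circ> transpose (M - 1) M)"
proof
  have consecutive: "t (M - 1) = t M + 1 \<or> t M = t (M - 1) + 1"
    using pair by (auto simp: doubleton_eq_iff)
  show "t \<circ> transpose (M - 1) M permutes {1..M}"
    using permutes_compose[OF permutes_swap_id permutes] two_le_M by auto
  show "even M" "2 \<le> M" by (fact even_M two_le_M)+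
  show "dumont_steps M (t \<circ> transpose (M - 1) M)"
    by (rule dumont_steps_swap_last[OF steps permutes_inj_on[OF permutes] assms])
  show "\<not> has_1342 M (t \<circ> transpose (M - 1) M)"
    using has_1342_swap_last[OF consecutive] avoids_1342 by blast
  show "\<not> has_4213 M (t \<circ> transpose (M - 1) M)"
    using has_4213_swap_last[OF consecutive] avoids_4213 by blast
qed

end

section \<open>The recursion\<close>

definition lift :: "nat \<Rightarrow> nat \<Rightarrow> nat" where
  "lift N v = (if v \<in> {1..N} then v + 2 else if v = N + 1 then 2 else if v = N + 2 then 1 else v)"

lemma lift_permutes: "lift N permutes {1..N + 2}"
  by (rule inj_imp_permutes) (auto simp: lift_def inj_on_def)

lemma relaxed_dumont_top_extension_iff:
  assumes w: "w permutes {1..N}" and "even N" "2 \<le> N"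
  shows "avoiding_relaxed_dumont (N + 2) (transpose (N + 1) (N + 2) \<circ> w)
    \<longleftrightarrow> avoiding_relaxed_dumont N w \<and> odd (w N)"
proof -
  let ?\<tau> = "transpose (N + 1) (N + 2) \<circ> w"
  have below: "?\<tau> i = w i" "w i \<le> N" if "i \<in> {1..N}" for i
    using permutes_in_seg[OF w that] by auto
  have top: "?\<tau> (N + 1) = N + 2" "?\<tau> (N + 2) = N + 1"
    using permutes_not_in[OF w] by auto
  have perm: "?\<tau> permutes {1..N + 2}"
    by (intro permutes_compose[OF permutes_subset[OF w]] permutes_swap_id) auto
  have "dumont_steps N ?\<tau> \<longleftrightarrow> dumont_steps N w"
    by (rule dumont_steps_shift[of 0]) (use below(1) in auto)
  moreover have "dumont_step ?\<tau> N \<longleftrightarrow> odd (w N)" "dumont_step ?\<tau> (N + 1)"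
    using below[of N] top \<open>2 \<le> N\<close> \<open>even N\<close> by (auto simp: dumont_step_def)
  ultimately have steps: "dumont_steps (N + 2) ?\<tau> \<longleftrightarrow> dumont_steps N w \<and> odd (w N)"
    using \<open>2 \<le> N\<close> by (simp add: dumont_steps_Suc)
  have extend: "\<forall>i\<in>{1..N}. \<forall>l\<in>{N<..N + 2}. ?\<tau> i < ?\<tau> l"
  proof (intro ballI)
    fix i l assume i: "i \<in> {1..N}" and "l \<in> {N<..N + 2}"
    then have "l = N + 1 \<or> l = N + 2" by auto
    then show "?\<tau> i < ?\<tau> l" using below[OF i] top by auto
  qed
  have "has_1342 (N + 2) ?\<tau> \<longleftrightarrow> has_1342 N w"
    using has_1342_extend extend has_1342_cong[of N ?\<tau> w] below by auto
  moreover have "has_4213 (N + 2) ?\<tau> \<longleftrightarrow> has_4213 N w"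
    using has_4213_extend extend has_4213_cong[of N ?\<tau> w] below by auto
  ultimately show ?thesis
    using perm steps w assms by (auto simp: avoiding_relaxed_dumont_def)
qed

lemma relaxed_dumont_bottom_extension_iff:
  assumes w: "w permutes {1..N}" and "even N" "2 \<le> N"
  shows "avoiding_relaxed_dumont (N + 2) (lift N \<circ> w)
    \<longleftrightarrow> avoiding_relaxed_dumont N w \<and> even (w N)"
proof -
  let ?\<tau> = "lift N \<circ> w"
  have below: "?\<tau> i = w i + 2" "1 \<le> w i" if "i \<in> {1..N}" for i
    using permutes_in_seg[OF w that] by (auto simp: lift_def)
  have bottom: "?\<tau> (N + 1) = 2" "?\<tau> (N + 2) = 1"
    using permutes_not_in[OF w] by (auto simp: lift_def)
  have perm: "?\<tau> permutes {1..N + 2}"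
    by (intro permutes_compose[OF permutes_subset[OF w]] lift_permutes) auto
  have "dumont_steps N ?\<tau> \<longleftrightarrow> dumont_steps N w"
    by (rule dumont_steps_shift[of 2]) (use below(1) in auto)
  moreover have "dumont_step ?\<tau> N \<longleftrightarrow> even (w N)" "dumont_step ?\<tau> (N + 1)"
    using below[of N] bottom \<open>2 \<le> N\<close> by (auto simp: dumont_step_def)
  ultimately have steps: "dumont_steps (N + 2) ?\<tau> \<longleftrightarrow> dumont_steps N w \<and> even (w N)"
    using \<open>2 \<le> N\<close> by (simp add: dumont_steps_Suc)
  have extend: "\<forall>i\<in>{1..N}. \<forall>l\<in>{N<..N + 2}. ?\<tau> l < ?\<tau> i"
  proof (intro ballI)
    fix i l assume i: "i \<in> {1..N}" and "l \<in> {N<..N + 2}"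
    then have "l = N + 1 \<or> l = N + 2" by auto
    then show "?\<tau> l < ?\<tau> i" using below[OF i] bottom by auto
  qed
  have "has_1342 (N + 2) ?\<tau> \<longleftrightarrow> has_1342 N w"
    using has_1342_extend extend has_1342_cong[of N ?\<tau> w] below by auto
  moreover have "has_4213 (N + 2) ?\<tau> \<longleftrightarrow> has_4213 N w"
    using has_4213_extend extend has_4213_cong[of N ?\<tau> w] below by auto
  ultimately show ?thesis
    using perm steps w assms by (auto simp: avoiding_relaxed_dumont_def)
qed

definition dumont_avoiders :: "nat \<Rightarrow> (nat \<Rightarrow> nat) set" where
  "dumont_avoiders n = dumont1_avoid n {[1, 3, 4, 2], [4, 2, 1, 3]}"

lemma dumont_avoiders_iff:
  assumes "1 \<le> n"
  shows "\<pi> \<in> dumont_avoiders n \<longleftrightarrow> avoiding_relaxed_dumont (2 * n) \<pi> \<and> odd (\<pi> (2 * n))"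
  unfolding dumont_avoiders_def dumont1_avoid_def mem_Collect_eq ball_simps
    contains_1342_iff contains_4213_iff
  using assms by (auto simp: dumont1_iff avoiding_relaxed_dumont_def)

text \<open>In one-line notation, \<open>top_extension N \<pi>\<close> is \<open>\<pi>(1) \<dots> \<pi>(N) (N+2) (N+1)\<close> and
  \<open>bottom_extension N \<pi>\<close> is \<open>(\<pi>(1)+2) \<dots> (\<pi>(N-2)+2) (\<pi>(N)+2) (\<pi>(N-1)+2) 2 1\<close>.\<close>

definition top_extension :: "nat \<Rightarrow> (nat \<Rightarrow> nat) \<Rightarrow> nat \<Rightarrow> nat" where
  "top_extension N \<pi> = transpose (N + 1) (N + 2) \<circ> \<pi>"

definition bottom_extension :: "nat \<Rightarrow> (nat \<Rightarrow> nat) \<Rightarrow> nat \<Rightarrow> nat" where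
  "bottom_extension N \<pi> = lift N \<circ> \<pi> \<circ> transpose (N - 1) N"

lemma top_extension_mem:
  assumes "\<pi> \<in> dumont_avoiders n" "1 \<le> n"
  shows "top_extension (2 * n) \<pi> \<in> dumont_avoiders (n + 1)"
proof -
  have \<pi>: "avoiding_relaxed_dumont (2 * n) \<pi>" "odd (\<pi> (2 * n))"
    using assms dumont_avoiders_iff by auto
  note perm = avoiding_relaxed_dumont.permutes[OF \<pi>(1)]
  have "avoiding_relaxed_dumont (2 * n + 2) (top_extension (2 * n) \<pi>)"
    using relaxed_dumont_top_extension_iff[OF perm] \<pi> assms(2) by (simp add: top_extension_def)
  moreover have "top_extension (2 * n) \<pi> (2 * n + 2) = 2 * n + 1"
    using permutes_not_in[OF perm] by (simp add: top_extension_def)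
  ultimately show ?thesis
    using dumont_avoiders_iff[of "n + 1"] by simp
qed

lemma bottom_extension_mem:
  assumes "\<pi> \<in> dumont_avoiders n" "1 \<le> n"
  shows "bottom_extension (2 * n) \<pi> \<in> dumont_avoiders (n + 1)"
proof -
  define N where "N = 2 * n"
  have \<pi>: "avoiding_relaxed_dumont N \<pi>" "odd (\<pi> N)"
    using assms dumont_avoiders_iff N_def by auto
  let ?u = "\<pi> \<circ> transpose (N - 1) N"
  have "\<pi> (N - 1) = \<pi> N + 1" using avoiding_relaxed_dumont.before_last_odd[OF \<pi>] .
  then have u: "avoiding_relaxed_dumont N ?u" "even (?u N)"
    using avoiding_relaxed_dumont.swap_last[OF \<pi>] \<pi>(2) by (auto simp: insert_commute)
  have "avoiding_relaxed_dumont (N + 2) (lift N \<circ> ?u)"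
    using relaxed_dumont_bottom_extension_iff[OF avoiding_relaxed_dumont.permutes[OF u(1)]] u
      assms(2) N_def by auto
  moreover have "(lift N \<circ> ?u) (N + 2) = 1"
    using permutes_not_in[OF avoiding_relaxed_dumont.permutes[OF \<pi>(1)]] by (simp add: lift_def)
  ultimately show ?thesis
    using dumont_avoiders_iff[of "n + 1"] N_def by (simp add: bottom_extension_def comp_assoc)
qed

lemma top_extension_preimage:
  assumes "\<pi> \<in> dumont_avoiders (n + 1)" "1 \<le> n" and last: "\<pi> (2 * n + 2) = 2 * n + 1"
  shows "\<pi> \<in> top_extension (2 * n) ` dumont_avoiders n"
proof -
  define N where "N = 2 * n"
  have \<pi>: "avoiding_relaxed_dumont (N + 2) \<pi>"
    using assms dumont_avoiders_iff[of "n + 1"] N_def by auto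
  have "\<pi> (N + 1) = N + 2"
    using avoiding_relaxed_dumont.before_last_odd[OF \<pi>] last N_def by auto
  let ?\<rho> = "transpose (N + 1) (N + 2) \<circ> \<pi>"
  have \<rho>: "?\<rho> permutes {1..N}"
  proof (rule permutes_superset)
    show "?\<rho> permutes {1..N + 2}"
      by (intro permutes_compose[OF avoiding_relaxed_dumont.permutes[OF \<pi>]] permutes_swap_id) auto
    show "?\<rho> x = x" if "x \<in> {1..N + 2} - {1..N}" for x
    proof -
      have "x = N + 1 \<or> x = N + 2" using that by auto
      then show ?thesis using \<open>\<pi> (N + 1) = N + 2\<close> last N_def by auto
    qed
  qed
  have extension: "top_extension N ?\<rho> = \<pi>" by (simp add: top_extension_def fun_eq_iff)
  then have "avoiding_relaxed_dumont N ?\<rho> \<and> odd (?\<rho> N)"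
    using relaxed_dumont_top_extension_iff[OF \<rho>] \<pi> assms(2) N_def
    by (simp add: top_extension_def)
  then have "?\<rho> \<in> dumont_avoiders n" using dumont_avoiders_iff assms(2) N_def by auto
  with extension show ?thesis unfolding N_def[symmetric] by (metis image_eqI)
qed

lemma bottom_extension_preimage:
  assumes "\<pi> \<in> dumont_avoiders (n + 1)" "1 \<le> n" and last: "\<pi> (2 * n + 2) = 1"
  shows "\<pi> \<in> bottom_extension (2 * n) ` dumont_avoiders n"
proof -
  define N where "N = 2 * n"
  have \<pi>: "avoiding_relaxed_dumont (N + 2) \<pi>"
    using assms dumont_avoiders_iff[of "n + 1"] N_def by auto
  have "\<pi> (N + 1) = 2"
    using avoiding_relaxed_dumont.before_last_odd[OF \<pi>] last N_def by auto
  let ?w = "inv (lift N) \<circ> \<pi>"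
  have lift_w: "lift N \<circ> ?w = \<pi>"
    by (simp add: fun_eq_iff permutes_inverses[OF lift_permutes])
  have w: "?w permutes {1..N}"
  proof (rule permutes_superset)
    show "?w permutes {1..N + 2}"
      using avoiding_relaxed_dumont.permutes[OF \<pi>] permutes_inv[OF lift_permutes]
      by (rule permutes_compose)
    show "?w x = x" if "x \<in> {1..N + 2} - {1..N}" for x
      using that \<open>\<pi> (N + 1) = 2\<close> last N_def
      by (auto simp: permutes_inv_eq[OF lift_permutes] lift_def)
  qed
  have w_relaxed: "avoiding_relaxed_dumont N ?w" and "even (?w N)"
    using relaxed_dumont_bottom_extension_iff[OF w] lift_w \<pi> assms(2) N_def by auto
  then have "?w (N - 1) + 1 = ?w N"
    by (rule avoiding_relaxed_dumont.before_last_even)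
  with \<open>even (?w N)\<close>
  have "odd (?w (N - 1))" "{?w (N - 1), ?w N} = {?w (N - 1), ?w (N - 1) + 1}"
    by (metis even_plus_one_iff)+
  then have "avoiding_relaxed_dumont N (?w \<circ> transpose (N - 1) N)"
    "odd ((?w \<circ> transpose (N - 1) N) N)"
    using avoiding_relaxed_dumont.swap_last[OF w_relaxed] by auto
  then have "?w \<circ> transpose (N - 1) N \<in> dumont_avoiders n"
    using dumont_avoiders_iff assms(2) N_def by auto
  moreover have "bottom_extension N (?w \<circ> transpose (N - 1) N) = \<pi>"
    using lift_w by (simp add: bottom_extension_def comp_assoc)
  ultimately show ?thesis unfolding N_def[symmetric] by (metis image_eqI)
qed

lemma dumont_avoiders_Suc:
  assumes "1 \<le> n"
  shows "dumont_avoiders (n + 1) =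
    top_extension (2 * n) ` dumont_avoiders n \<union> bottom_extension (2 * n) ` dumont_avoiders n"
proof
  show "dumont_avoiders (n + 1) \<subseteq>
    top_extension (2 * n) ` dumont_avoiders n \<union> bottom_extension (2 * n) ` dumont_avoiders n"
  proof
    fix \<pi> assume \<pi>: "\<pi> \<in> dumont_avoiders (n + 1)"
    then have "avoiding_relaxed_dumont (2 * n + 2) \<pi>" "odd (\<pi> (2 * n + 2))"
      using dumont_avoiders_iff[of "n + 1"] by auto
    then have "\<pi> (2 * n + 2) = 1 \<or> \<pi> (2 * n + 2) = 2 * n + 1"
      using avoiding_relaxed_dumont.last_odd_cases by fastforce
    then show "\<pi> \<in>
      top_extension (2 * n) ` dumont_avoiders n \<union> bottom_extension (2 * n) ` dumont_avoiders n"
      using top_extension_preimage[OF \<pi> assms] bottom_extension_preimage[OF \<pi> assms] by blast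
  qed
qed (use top_extension_mem bottom_extension_mem assms in auto)

lemma inj_top_extension: "inj (top_extension N)"
proof (rule injI)
  fix \<pi> \<pi>' assume "top_extension N \<pi> = top_extension N \<pi>'"
  then have "transpose (N + 1) (N + 2) \<circ> top_extension N \<pi>
    = transpose (N + 1) (N + 2) \<circ> top_extension N \<pi>'"
    by simp
  then show "\<pi> = \<pi>'" by (simp add: top_extension_def fun_eq_iff)
qed

lemma inj_bottom_extension: "inj (bottom_extension N)"
proof (rule injI)
  fix \<pi> \<pi>' assume "bottom_extension N \<pi> = bottom_extension N \<pi>'"
  then have "inv (lift N) \<circ> bottom_extension N \<pi> \<circ> transpose (N - 1) N
    = inv (lift N) \<circ> bottom_extension N \<pi>' \<circ> transpose (N - 1) N"
    by simp
  then show "\<pi> = \<pi>'"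
    by (simp add: bottom_extension_def fun_eq_iff permutes_inverses[OF lift_permutes])
qed

lemma top_extension_ne_bottom_extension:
  assumes "\<pi> permutes {1..N}" "\<pi>' permutes {1..N}" "2 \<le> N"
  shows "top_extension N \<pi> \<noteq> bottom_extension N \<pi>'"
proof -
  have "top_extension N \<pi> (N + 2) = N + 1"
    using permutes_not_in[OF assms(1)] by (simp add: top_extension_def)
  moreover have "bottom_extension N \<pi>' (N + 2) = 1"
    using permutes_not_in[OF assms(2)] assms(3) by (simp add: bottom_extension_def lift_def)
  ultimately show ?thesis using assms(3) by auto
qed

lemma finite_dumont_avoiders: "finite (dumont_avoiders n)"
proof (rule finite_subset)
  show "dumont_avoiders n \<subseteq> {\<pi>. \<pi> permutes {1..2 * n}}"
    by (auto simp: dumont_avoiders_def dumont1_avoid_def dumont1_def)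
qed (simp add: finite_permutations)

lemma card_dumont_avoiders_Suc:
  assumes "1 \<le> n"
  shows "card (dumont_avoiders (n + 1)) = 2 * card (dumont_avoiders n)"
proof -
  have "top_extension (2 * n) ` dumont_avoiders n \<inter> bottom_extension (2 * n) ` dumont_avoiders n
    = {}"
    using top_extension_ne_bottom_extension assms dumont_avoiders_iff
      avoiding_relaxed_dumont.permutes
    by fastforce
  then show ?thesis
    unfolding dumont_avoiders_Suc[OF assms]
    by (simp add: card_Un_disjoint finite_dumont_avoiders card_image
      inj_on_subset[OF inj_top_extension] inj_on_subset[OF inj_bottom_extension])
qed

lemma dumont_avoiders_1: "dumont_avoiders 1 = {transpose 1 2}"
proof
  show "dumont_avoiders 1 \<subseteq> {transpose 1 2}"
  proof
    fix \<pi> assume "\<pi> \<in> dumont_avoiders 1"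
    then have \<pi>: "avoiding_relaxed_dumont 2 \<pi>" "odd (\<pi> 2)"
      using dumont_avoiders_iff[of 1] by auto
    then have "\<pi> 2 = 1" "\<pi> 1 = 2"
      using avoiding_relaxed_dumont.last_odd_cases[OF \<pi>]
        avoiding_relaxed_dumont.before_last_odd[OF \<pi>]
      by auto
    moreover have "\<pi> x = x" if "x \<notin> {1, 2}" for x
      using permutes_not_in[OF avoiding_relaxed_dumont.permutes[OF \<pi>(1)]] that by auto
    ultimately show "\<pi> \<in> {transpose 1 2}"
      by (auto simp: fun_eq_iff transpose_def)
  qed
  have "dumont_steps 2 (transpose 1 2)"
    unfolding dumont_steps_def dumont_step_def by (auto simp: transpose_def)
  then have "avoiding_relaxed_dumont 2 (transpose 1 2)"
    by unfold_locales (auto simp: permutes_swap_id has_1342_def has_4213_def)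
  then show "{transpose 1 2} \<subseteq> dumont_avoiders 1"
    using dumont_avoiders_iff[of 1] by simp
qed

theorem theorem3p9:
  fixes n :: nat
  assumes "n \<ge> 1"
  shows "card (dumont1_avoid n {[1,3,4,2], [4,2,1,3]}) = 2 ^ (n - 1)"
  using assms
proof (induction n rule: nat_induct_at_least)
  case base
  show ?case using dumont_avoiders_1 by (simp add: dumont_avoiders_def)
next
  case (Suc n)
  then show ?case
    using card_dumont_avoiders_Suc[OF Suc.hyps] by (simp add: dumont_avoiders_def power_eq_if)
qed

end
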